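(* Let $m,n$ be positive integers, $A\in\mathbb{C}^{n\times n}$, $B\in\mathbb{C}^{n\times m}$ with $\operatorname{rank}(B)=m$, $(A,B)$ reachable and all eigenvalues of $A$ of modulus $<1$. Let $\mathbf{R}\in\mathbb{C}^{n\times n}$ be Hermitian with $\mathbf{R}\geq0$ and $\mathbf{R}-A\mathbf{R}A^*=BH+H^*B^*$ for some $H\in\mathbb{C}^{m\times n}$. Let $\Omega$ be the $\mathbb{H}_m$-minimal value of $q_{\mathbf{R}}(\Gamma)=\Gamma\mathbf{R}\Gamma^*$ over $\Gamma\in\mathbb{C}^{m\times n}$ subject to $\Gamma B=I_m$. If $\Omega>0$ then $\mathbf{R}>0$.
   Context: $\mathbb{H}_m$ is the space of $m\times m$ Hermitian matrices partially ordered by $X\geq Y$ iff $X-Y$ is nonnegative definite. The $\mathbb{H}_m$-minimal value is $q_{\mathbf{R}}(\Gamma_0)$ for some $\Gamma_0$ with $\Gamma_0B=I_m$ and $q_{\mathbf{R}}(\Gamma_0)\leq q_{\mathbf{R}}(\Gamma)$ for all $\Gamma$ with $\Gamma B=I_m$ (such a least element exists). $(A,B)$ reachable means $\operatorname{rank}[B,AB,\dots,A^{n-1}B]=n$. *)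

theory Defs
  imports "HOL-Analysis.Analysis"
begin

definition cadj :: "complex^'c^'r \<Rightarrow> complex^'r^'c" where
  "cadj X = (\<chi> i j. cnj (X $ j $ i))"

definition hermitian :: "complex^'n^'n \<Rightarrow> bool" where
  "hermitian X \<longleftrightarrow> cadj X = X"

definition qform :: "complex^'n^'n \<Rightarrow> complex^'n \<Rightarrow> complex" where
  "qform X x = (\<Sum>i\<in>UNIV. cnj (x $ i) * (X *v x) $ i)"

definition psd :: "complex^'n^'n \<Rightarrow> bool" where
  "psd X \<longleftrightarrow> hermitian X \<and> (\<forall>x. Re (qform X x) \<ge> 0)"

definition pd :: "complex^'n^'n \<Rightarrow> bool" where
  "pd X \<longleftrightarrow> hermitian X \<and> (\<forall>x. x \<noteq> 0 \<longrightarrow> Re (qform X x) > 0)"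

definition loewner_le :: "complex^'n^'n \<Rightarrow> complex^'n^'n \<Rightarrow> bool" where
  "loewner_le X Y \<longleftrightarrow> hermitian X \<and> hermitian Y \<and> psd (Y - X)"

definition mpow :: "complex^'n^'n \<Rightarrow> nat \<Rightarrow> complex^'n^'n" where
  "mpow A k = (((**) A) ^^ k) (mat 1)"

definition idx :: "'n::finite \<Rightarrow> nat" where
  "idx = (SOME f. bij_betw f (UNIV::'n set) {..<CARD('n)})"

(* reachability matrix [B, AB, ..., A^(n-1) B]; column (j,k) is column j of A^(idx k) B *)
definition ctrb :: "complex^'n^'n \<Rightarrow> complex^'m^'n \<Rightarrow> complex^('m \<times> 'n)^'n" where
  "ctrb A B = (\<chi> i jk. (mpow A (idx (snd jk)) ** B) $ i $ fst jk)"

definition reachable :: "complex^'n^'n \<Rightarrow> complex^'m^'n \<Rightarrow> bool" where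
  "reachable A B \<longleftrightarrow> rank (ctrb A B) = CARD('n)"

definition qR :: "complex^'n^'n \<Rightarrow> complex^'n^'m \<Rightarrow> complex^'m^'m" where
  "qR R G = G ** R ** cadj G"

end

theory Submission
  imports Defs
begin

(* If R x = 0 then B^* x = 0: otherwise, with w = B^* x, some admissible \<Gamma> has \<Gamma>^* w = x, so
   w^* q_R(\<Gamma>) w = x^* R x = 0 < w^* \<Omega> w, contradicting the minimality of \<Omega>.
   For such x the Lyapunov identity gives x^* (R - A R A^* ) x = 0, i.e. (A^* x)^* R (A^* x) = 0, so
   A^* x is again in the kernel of R. Hence the kernel of R is A^*-invariant and orthogonal to the
   columns of every A^k B, which by reachability forces it to be trivial. *)

definition cinner :: "complex^'n \<Rightarrow> complex^'n \<Rightarrow> complex" where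
  "cinner x y = (\<Sum>i\<in>UNIV. cnj (x $ i) * y $ i)"

lemma qform_eq_cinner: "qform X x = cinner x (X *v x)"
  by (simp add: qform_def cinner_def)

lemma cinner_adjoint: "cinner x (M *v y) = cinner (cadj M *v x) y"
proof -
  have "cinner x (M *v y) = (\<Sum>i\<in>UNIV. \<Sum>j\<in>UNIV. cnj (x $ i) * M $ i $ j * y $ j)"
    by (simp add: cinner_def matrix_vector_mult_def sum_distrib_left mult.assoc)
  also have "\<dots> = (\<Sum>j\<in>UNIV. \<Sum>i\<in>UNIV. cnj (x $ i) * M $ i $ j * y $ j)"
    by (rule sum.swap)
  also have "\<dots> = cinner (cadj M *v x) y"
    by (simp add: cinner_def matrix_vector_mult_def cadj_def sum_distrib_left sum_distrib_right
        mult.commute mult.left_commute)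
  finally show ?thesis .
qed

lemma cinner_add_left: "cinner (x + y) z = cinner x z + cinner y z"
  by (simp add: cinner_def distrib_right sum.distrib)

lemma cinner_add_right: "cinner x (y + z) = cinner x y + cinner x z"
  by (simp add: cinner_def distrib_left sum.distrib)

lemma cinner_diff_right: "cinner x (y - z) = cinner x y - cinner x z"
  by (simp add: cinner_def right_diff_distrib sum_subtractf)

lemma cinner_minus_right: "cinner x (- y) = - cinner x y"
  by (simp add: cinner_def sum_negf)

lemma cinner_scale_left: "cinner (c *s x) y = cnj c * cinner x y"
  by (simp add: cinner_def sum_distrib_left mult.assoc)

lemma cinner_scale_right: "cinner x (c *s y) = c * cinner x y"
  by (simp add: cinner_def sum_distrib_left mult.left_commute)

lemma cinner_zero_left [simp]: "cinner 0 x = 0"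
  by (simp add: cinner_def)

lemma cinner_zero_right [simp]: "cinner x 0 = 0"
  by (simp add: cinner_def)

lemma cnj_cinner: "cnj (cinner x y) = cinner y x"
  by (simp add: cinner_def mult.commute)

lemma Re_cinner_self: "Re (cinner x x) = (\<Sum>i\<in>UNIV. (cmod (x $ i))\<^sup>2)"
  by (simp add: cinner_def Re_sum complex_norm_square[symmetric] mult.commute
      del: of_real_power)

lemma Re_cinner_self_eq_0_iff: "Re (cinner x x) = 0 \<longleftrightarrow> x = 0"
  by (simp add: Re_cinner_self sum_nonneg_eq_0_iff vec_eq_iff)

lemma cadj_cadj [simp]: "cadj (cadj M) = M"
  by (simp add: cadj_def vec_eq_iff)

lemma cadj_mat_1 [simp]: "cadj (mat 1) = mat 1"
  by (simp add: cadj_def vec_eq_iff mat_def)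

lemma cadj_add: "cadj (M + N) = cadj M + cadj N"
  by (simp add: cadj_def vec_eq_iff)

lemma cadj_matrix_mult: "cadj (M ** N) = cadj N ** cadj M"
  by (simp add: cadj_def vec_eq_iff matrix_matrix_mult_def mult.commute)

lemma matrix_add_rdistrib: "((A::'a::semiring_1^'n^'m) + B) ** C = A ** C + B ** C"
  by (simp add: vec_eq_iff matrix_matrix_mult_def distrib_right sum.distrib)

lemma qform_diff: "qform (X - Y) x = qform X x - qform Y x"
  by (simp add: qform_eq_cinner matrix_vector_mult_diff_rdistrib cinner_diff_right)

lemma linear_coeff_eq_0_if_quadratic_nonneg:
  fixes a b :: real
  assumes "\<And>t. 2 * t * a + t\<^sup>2 * b \<ge> 0"
  shows "a = 0"
proof (rule ccontr)
  assume "a \<noteq> 0"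
  define t where "t = - a / (\<bar>b\<bar> + 1)"
  have "\<bar>t * b\<bar> = \<bar>a\<bar> * (\<bar>b\<bar> / (\<bar>b\<bar> + 1))"
    by (simp add: t_def abs_mult)
  also have "\<dots> < \<bar>a\<bar>"
    using \<open>a \<noteq> 0\<close> by (simp add: divide_less_eq algebra_simps add_pos_nonneg)
  finally have "t * (2 * a + t * b) < 0"
    using \<open>a \<noteq> 0\<close> unfolding t_def
    by (smt (verit) divide_neg_pos divide_pos_pos mult_neg_pos mult_pos_neg zero_less_mult_iff)
  with assms[of t] show False by (simp add: power2_eq_square algebra_simps)
qed

lemma psd_qform_eq_0_imp_kernel:
  assumes psd: "psd R" and "Re (qform R x) = 0"
  shows "R *v x = 0"
proof -
  define y where "y = R *v x"
  have "cadj R = R" using psd by (simp add: psd_def hermitian_def)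
  then have xRy: "cinner x (R *v y) = cnj (cinner y y)"
    by (metis cinner_adjoint cnj_cinner y_def)
  have "Re (qform R (x + of_real t *s y)) = 2 * t * Re (cinner y y) + t\<^sup>2 * Re (qform R y)"
    for t :: real
  proof -
    have "qform R (x + of_real t *s y) = cinner x (R *v x) + of_real t * cinner x (R *v y)
        + of_real t * cinner y (R *v x) + of_real t * of_real t * cinner y (R *v y)"
      by (simp add: qform_eq_cinner matrix_vector_right_distrib vector_scalar_commute
          cinner_add_left cinner_add_right cinner_scale_left cinner_scale_right algebra_simps)
    then show ?thesis using \<open>Re (qform R x) = 0\<close>
      by (simp add: xRy qform_eq_cinner y_def[symmetric] power2_eq_square)
  qed
  moreover have "Re (qform R (x + of_real t *s y)) \<ge> 0" for t :: real
    using psd by (simp add: psd_def)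
  ultimately have "Re (cinner y y) = 0"
    by (intro linear_coeff_eq_0_if_quadratic_nonneg[where b = "Re (qform R y)"]) metis
  then show ?thesis by (simp add: Re_cinner_self_eq_0_iff y_def)
qed

definition outer :: "complex^'m \<Rightarrow> complex^'n \<Rightarrow> complex^'n^'m" where
  "outer w e = (\<chi> i j. w $ i * cnj (e $ j))"

lemma outer_matrix_mult: "outer w e ** B = outer w (cadj B *v e)"
  by (simp add: outer_def vec_eq_iff matrix_matrix_mult_def cadj_def matrix_vector_mult_def
      sum_distrib_left mult.assoc mult.commute mult.left_commute)

lemma outer_zero_right [simp]: "outer w 0 = 0"
  by (simp add: outer_def vec_eq_iff)

lemma cadj_outer_mult_vector: "cadj (outer w e) *v v = cinner w v *s e"
  by (simp add: outer_def vec_eq_iff cadj_def matrix_vector_mult_def cinner_def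
      sum_distrib_left sum_distrib_right mult.commute mult.left_commute)

lemma minimal_qR_pd_imp_kernel_subset:
  fixes B :: "complex^'m^'n" and \<Gamma>0 :: "complex^'n^'m"
  assumes G0: "\<Gamma>0 ** B = mat 1"
    and G0min: "\<And>\<Gamma>. \<Gamma> ** B = mat 1 \<Longrightarrow> loewner_le (qR R \<Gamma>0) (qR R \<Gamma>)"
    and pos: "pd (qR R \<Gamma>0)"
    and Rx: "R *v x = 0"
  shows "cadj B *v x = 0"
proof (rule ccontr)
  define w where "w = cadj B *v x"
  assume "cadj B *v x \<noteq> 0"
  then have "w \<noteq> 0" by (simp add: w_def)
  then have ww: "cinner w w \<noteq> 0" using Re_cinner_self_eq_0_iff by force
  \<comment> \<open>\<open>\<Gamma> = \<Gamma>0 + w e\<^sup>*\<close> is admissible because \<open>B\<^sup>* e = 0\<close>, and \<open>\<Gamma>\<^sup>* w = x\<close>\<close>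
  define e where "e = (1 / cinner w w) *s (x - cadj \<Gamma>0 *v w)"
  define \<Gamma> where "\<Gamma> = \<Gamma>0 + outer w e"
  have "cadj B *v (cadj \<Gamma>0 *v w) = w"
    by (simp add: matrix_vector_mul_assoc cadj_matrix_mult[symmetric] G0)
  then have "cadj B *v e = 0"
    by (simp add: e_def vector_scalar_commute matrix_vector_mult_diff_distrib w_def[symmetric])
  then have "\<Gamma> ** B = mat 1"
    by (simp add: \<Gamma>_def matrix_add_rdistrib outer_matrix_mult G0)
  then have "psd (qR R \<Gamma> - qR R \<Gamma>0)"
    using G0min by (simp add: loewner_le_def)
  then have "Re (qform (qR R \<Gamma>) w) \<ge> Re (qform (qR R \<Gamma>0) w)"
    by (simp add: psd_def qform_diff)
  moreover have "cadj \<Gamma> *v w = x"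
    using ww by (simp add: \<Gamma>_def cadj_add matrix_vector_mult_add_rdistrib cadj_outer_mult_vector
        e_def)
  then have "qform (qR R \<Gamma>) w = 0"
    by (simp add: qform_eq_cinner qR_def matrix_vector_mul_assoc[symmetric] Rx)
  moreover have "Re (qform (qR R \<Gamma>0) w) > 0"
    using pos \<open>w \<noteq> 0\<close> by (simp add: pd_def)
  ultimately show False by simp
qed

lemma lyapunov_kernel_invariant:
  fixes B :: "complex^'m^'n" and H :: "complex^'n^'m"
  assumes psd: "psd R"
    and lyap: "R - A ** R ** cadj A = B ** H + cadj H ** cadj B"
    and Rx: "R *v x = 0" and Bx: "cadj B *v x = 0"
  shows "R *v (cadj A *v x) = 0"
proof -
  have "qform (R - A ** R ** cadj A) x = - qform R (cadj A *v x)"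
    by (simp add: qform_eq_cinner matrix_vector_mult_diff_rdistrib cinner_diff_right
        matrix_vector_mul_assoc[symmetric] Rx cinner_minus_right cinner_adjoint[of x A])
  moreover have "qform (B ** H + cadj H ** cadj B) x = 0"
    by (simp add: qform_eq_cinner matrix_vector_mult_add_rdistrib cinner_add_right
        matrix_vector_mul_assoc[symmetric] Bx cinner_adjoint[of x B])
  ultimately have "qform R (cadj A *v x) = 0"
    using lyap by simp
  then show ?thesis
    using psd_qform_eq_0_imp_kernel[OF psd] by simp
qed

lemma cadj_mpow_invariant:
  assumes "\<And>x. P x \<Longrightarrow> P (cadj A *v x)" and "P x"
  shows "P (cadj (mpow A k) *v x)"
  using assms(2)
proof (induction k arbitrary: x)
  case 0
  then show ?case by (simp add: mpow_def)
next
  case (Suc k)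
  have "cadj (mpow A (Suc k)) *v x = cadj (mpow A k) *v (cadj A *v x)"
    by (simp add: mpow_def cadj_matrix_mult matrix_vector_mul_assoc)
  then show ?case using Suc.IH assms(1)[OF Suc.prems] by simp
qed

lemma pd_if_psd_kernel_trivial:
  fixes R :: "complex^'n^'n"
  assumes psd: "psd R" and ker: "\<And>x. R *v x = 0 \<Longrightarrow> x = 0"
  shows "pd R"
  unfolding pd_def
proof (intro conjI allI impI)
  show "hermitian R" using psd by (simp add: psd_def)
  fix x :: "complex^'n"
  assume "x \<noteq> 0"
  then have "Re (qform R x) \<noteq> 0"
    using ker psd_qform_eq_0_imp_kernel[OF psd] by blast
  moreover have "Re (qform R x) \<ge> 0" using psd by (simp add: psd_def)
  ultimately show "Re (qform R x) > 0" by simp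
qed

lemma vector_matrix_mult_eq_0_imp_rank_less:
  fixes M :: "'a::field^'c^'r"
  assumes "y \<noteq> 0" and "y v* M = 0"
  shows "rank M < CARD('r)"
proof (rule ccontr)
  assume "\<not> rank M < CARD('r)"
  then have dim: "vec.dim (rows M) \<ge> CARD('r)" by (simp add: row_rank_def_gen)
  have rows: "rows M = range (\<lambda>i. row i M)" by (auto simp: rows_def)
  then have fin: "finite (rows M)" by simp
  have "vec.dim (rows M) \<le> card (rows M)"
    by (rule vec.dim_le_card[OF vec.span_superset fin])
  moreover have "card (rows M) \<le> CARD('r)"
    unfolding rows by (rule card_image_le) simp
  ultimately have card_rows: "card (rows M) = CARD('r)" "card (rows M) = vec.dim (rows M)"
    using dim by linarith+
  have inj: "inj (\<lambda>i. row i M)"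
    using card_rows(1) rows by (intro eq_card_imp_inj_on) auto
  have indep: "vec.independent (rows M)"
    using vec.card_eq_dim[OF subset_refl card_rows(2) fin] vec.span_superset by blast
  define c where "c = (\<lambda>v. y $ inv (\<lambda>i. row i M) v)"
  have "(\<Sum>v\<in>rows M. c v *s v) = (\<Sum>i\<in>UNIV. y $ i *s row i M)"
    unfolding rows by (simp add: sum.reindex[OF inj] c_def inv_f_f[OF inj])
  also have "\<dots> = y v* M"
    by (simp add: vec_eq_iff row_def vector_matrix_mult_def sum_component mult.commute)
  finally have "(\<Sum>v\<in>rows M. c v *s v) = 0"
    using \<open>y v* M = 0\<close> by simp
  then have "\<forall>v\<in>rows M. c v = 0"
    using indep unfolding vec.independent_explicit by blast
  then have "y = 0"
    by (simp add: rows c_def inv_f_f[OF inj] vec_eq_iff)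
  with \<open>y \<noteq> 0\<close> show False ..
qed

lemma reachable_orthogonal_imp_zero:
  fixes A :: "complex^'n^'n" and B :: "complex^'m^'n"
  assumes "reachable A B" and orth: "\<And>k. cadj (mpow A k ** B) *v x = 0"
  shows "x = 0"
proof (rule ccontr)
  define y where "y = (\<chi> i. cnj (x $ i))"
  assume "x \<noteq> 0"
  then have "y \<noteq> 0" by (simp add: y_def vec_eq_iff)
  moreover have "(y v* ctrb A B) $ jk = cnj ((cadj (mpow A (idx (snd jk)) ** B) *v x) $ fst jk)"
    for jk
    by (simp add: y_def ctrb_def cadj_def vector_matrix_mult_def matrix_vector_mult_def
        mult.commute)
  then have "y v* ctrb A B = 0" by (simp add: orth vec_eq_iff)
  ultimately have "rank (ctrb A B) < CARD('n)"
    by (rule vector_matrix_mult_eq_0_imp_rank_less)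
  with \<open>reachable A B\<close> show False by (simp add: reachable_def)
qed

theorem proposition2:
  fixes A :: "complex^'n^'n" and B :: "complex^'m^'n" and R :: "complex^'n^'n"
    and \<Gamma>0 :: "complex^'n^'m" and \<Omega> :: "complex^'m^'m"
  assumes rankB: "rank B = CARD('m)"
    and reach: "reachable A B"
    and stable: "\<And>c v. v \<noteq> 0 \<Longrightarrow> A *v v = c *s v \<Longrightarrow> norm c < 1"
    and Rpsd: "psd R"
    and lyap: "\<exists>H :: complex^'n^'m. R - A ** R ** cadj A = B ** H + cadj H ** cadj B"
    and G0: "\<Gamma>0 ** B = mat 1"
    and G0min: "\<And>\<Gamma>. \<Gamma> ** B = mat 1 \<Longrightarrow> loewner_le (qR R \<Gamma>0) (qR R \<Gamma>)"
    and Omega: "\<Omega> = qR R \<Gamma>0"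
    and Omega_pos: "pd \<Omega>"
  shows "pd R"
proof (rule pd_if_psd_kernel_trivial[OF Rpsd])
  obtain H :: "complex^'n^'m" where H: "R - A ** R ** cadj A = B ** H + cadj H ** cadj B"
    using lyap by blast
  have ker_B: "cadj B *v x = 0" if "R *v x = 0" for x
    using minimal_qR_pd_imp_kernel_subset[OF G0 G0min _ that] Omega Omega_pos by simp
  have ker_A: "R *v (cadj A *v x) = 0" if "R *v x = 0" for x
    using lyapunov_kernel_invariant[OF Rpsd H that ker_B[OF that]] .
  fix x
  assume "R *v x = 0"
  then have "R *v (cadj (mpow A k) *v x) = 0" for k
    using cadj_mpow_invariant[where P = "\<lambda>x. R *v x = 0"] ker_A by blast
  then have "cadj (mpow A k ** B) *v x = 0" for k
    using ker_B by (simp add: cadj_matrix_mult matrix_vector_mul_assoc[symmetric])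
  then show "x = 0"
    using reachable_orthogonal_imp_zero[OF reach] by blast
qed

end
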